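(* Let $r\geq 2$ be a fixed integer. For each $n$, let $L=L_n$ be a simplicial complex with $n$ vertices and $p_1=p_1(n)\in[0,1]$. Let $G(L,p_1)$ be the random graph obtained by including each $1$-simplex of $L$ independently with probability $p_1$. If $\lim_{n\to\infty}p_1/n^{-2/(r+1)}=0$, then $\dim X_{G(L,p_1),L}\leq r$ asymptotically almost surely. If in addition $\lim_{n\to\infty}p_1/n^{-2/r}=\infty$ and $\mathrm{Sk}^r(L)=\mathrm{Sk}^r(\Delta_n)$, then $\dim X_{G(L,p_1),L}=r$ asymptotically almost surely.
   Context: $\Delta_n$ is the complete simplicial complex on the $n$ vertices (all nonempty subsets), and $L\subseteq\Delta_n$. $\mathrm{Sk}^r$ denotes the $r$-skeleton (simplices of dimension $\leq r$; dimension of a simplex is its cardinality minus one). For a graph $G$ on these vertices, $X_G$ is its clique complex (simplices are the sets of vertices pairwise joined by edges of $G$), and $X_{G,L}=X_G\cap L$. An event depending on $n$ holds asymptotically almost surely (a.a.s.) if its probability tends to $1$ as $n\to\infty$. *)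

theory Defs
  imports "HOL-Probability.Probability"
begin

definition Delta :: "nat \<Rightarrow> nat set set" where
  "Delta n = {\<sigma>. \<sigma> \<subseteq> {0..<n} \<and> \<sigma> \<noteq> {}}"

definition simplicial_complex_on :: "nat \<Rightarrow> nat set set \<Rightarrow> bool" where
  "simplicial_complex_on n L \<longleftrightarrow> L \<subseteq> Delta n \<and>
     (\<forall>\<sigma>\<in>L. \<forall>\<tau>. \<tau> \<subseteq> \<sigma> \<and> \<tau> \<noteq> {} \<longrightarrow> \<tau> \<in> L)"

text \<open>r-skeleton: simplices of dimension at most r, i.e. cardinality at most r+1.\<close>
definition Sk :: "nat \<Rightarrow> nat set set \<Rightarrow> nat set set" where
  "Sk r K = {\<sigma>\<in>K. card \<sigma> \<le> r + 1}"

definition cdim :: "nat set set \<Rightarrow> int" where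
  "cdim K = (if K = {} then -1 else int (Max (card ` K)) - 1)"

text \<open>A graph is given by its set of edges (2-element vertex sets).\<close>
definition clique_complex :: "nat \<Rightarrow> nat set set \<Rightarrow> nat set set" where
  "clique_complex n G = {\<sigma>\<in>Delta n. \<forall>u\<in>\<sigma>. \<forall>v\<in>\<sigma>. u \<noteq> v \<longrightarrow> {u, v} \<in> G}"

definition X_GL :: "nat \<Rightarrow> nat set set \<Rightarrow> nat set set \<Rightarrow> nat set set" where
  "X_GL n G L = clique_complex n G \<inter> L"

definition edges :: "nat set set \<Rightarrow> nat set set" where
  "edges L = {e\<in>L. card e = 2}"

definition random_graph :: "nat set set \<Rightarrow> real \<Rightarrow> nat set set pmf" where
  "random_graph L p =
     map_pmf (\<lambda>f. {e\<in>edges L. f e}) (Pi_pmf (edges L) False (\<lambda>_. bernoulli_pmf p))"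

definition aas :: "(nat \<Rightarrow> 'a pmf) \<Rightarrow> (nat \<Rightarrow> 'a \<Rightarrow> bool) \<Rightarrow> bool" where
  "aas M P \<longleftrightarrow> (\<lambda>n. measure_pmf.prob (M n) {x. P n x}) \<longlonglongrightarrow> 1"

end

theory Submission
  imports Defs
begin

text \<open>Upper bound: X has dimension above r only if some simplex of L on r + 2 vertices is a
  clique of G, and the expected number of such cliques is at most n^(r+2) p^C(r+2,2), which tends
  to 0 when p = o(n^(-2/(r+1))).  Lower bound: when the r-skeleton of L is complete, every clique
  of G on r + 1 vertices is an r-simplex of X, and by the second moment method such a clique exists
  a.a.s. once p/n^(-2/r) tends to infinity; the variance is governed by pairs of cliques sharing
  j \<ge> 2 vertices, each j contributing a term of order 1/(n^j p^C(j,2)) \<le> n^(-2/r)/p.\<close>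

lemma finite_Delta: "finite (Delta n)"
  unfolding Delta_def by (rule finite_subset[of _ "Pow {0..<n}"]) auto

lemma finite_edges: "L \<subseteq> Delta n \<Longrightarrow> finite (edges L)"
  by (rule finite_subset[OF _ finite_Delta[of n]]) (auto simp: edges_def)

section \<open>The second moment method\<close>

lemma prob_eq_0_le_variance:
  fixes X :: "'a \<Rightarrow> real"
  assumes "finite (set_pmf M)" and "measure_pmf.expectation M X > 0"
  shows "measure_pmf.prob M {x. X x = 0}
    \<le> measure_pmf.variance M X / (measure_pmf.expectation M X)\<^sup>2"
proof -
  let ?\<mu> = "measure_pmf.expectation M X"
  have "measure_pmf.prob M {x. X x = 0} \<le> measure_pmf.prob M {x\<in>space M. \<bar>X x - ?\<mu>\<bar> \<ge> ?\<mu>}"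
    by (rule measure_pmf.finite_measure_mono) auto
  also have "\<dots> \<le> measure_pmf.variance M X / ?\<mu>\<^sup>2"
    by (rule measure_pmf.Chebyshev_inequality)
      (use assms in \<open>auto intro: integrable_measure_pmf_finite\<close>)
  finally show ?thesis .
qed

lemma prob_none_le_second_moment:
  assumes M: "finite (set_pmf M)" and S: "finite S"
    and pos: "(\<Sum>i\<in>S. measure_pmf.prob M (A i)) > 0"
  shows "measure_pmf.prob M {x. \<forall>i\<in>S. x \<notin> A i}
    \<le> ((\<Sum>i\<in>S. \<Sum>j\<in>S. measure_pmf.prob M (A i \<inter> A j)) - (\<Sum>i\<in>S. measure_pmf.prob M (A i))\<^sup>2)
      / (\<Sum>i\<in>S. measure_pmf.prob M (A i))\<^sup>2"
proof -
  define X where "X x = (\<Sum>i\<in>S. indicator (A i) x :: real)" for x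
  have int: "integrable M f" for f :: "_ \<Rightarrow> real"
    using M by (rule integrable_measure_pmf_finite)
  have mean: "measure_pmf.expectation M X = (\<Sum>i\<in>S. measure_pmf.prob M (A i))"
    unfolding X_def by (subst Bochner_Integration.integral_sum) (simp_all add: int)
  have "(X x)\<^sup>2 = (\<Sum>i\<in>S. \<Sum>j\<in>S. indicator (A i \<inter> A j) x)" for x
    unfolding X_def power2_eq_square sum_product by (simp add: indicator_inter_arith)
  then have square: "measure_pmf.expectation M (\<lambda>x. (X x)\<^sup>2)
      = (\<Sum>i\<in>S. \<Sum>j\<in>S. measure_pmf.prob M (A i \<inter> A j))"
    by (simp add: Bochner_Integration.integral_sum int)
  have zero: "X x = 0 \<longleftrightarrow> (\<forall>i\<in>S. x \<notin> A i)" for x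
    unfolding X_def using S by (subst sum_nonneg_eq_0_iff) auto
  have "measure_pmf.variance M X
      = measure_pmf.expectation M (\<lambda>x. (X x)\<^sup>2) - (measure_pmf.expectation M X)\<^sup>2"
    by (rule measure_pmf.variance_eq) (simp_all add: int)
  then show ?thesis
    using prob_eq_0_le_variance[OF M, of X] pos by (simp add: mean square zero)
qed

section \<open>Counting vertex sets\<close>

definition pairs :: "nat set \<Rightarrow> nat set set" where
  "pairs \<sigma> = {e. e \<subseteq> \<sigma> \<and> card e = 2}"

definition k_subsets :: "nat \<Rightarrow> nat \<Rightarrow> nat set set" where
  "k_subsets n k = {\<sigma>. \<sigma> \<subseteq> {0..<n} \<and> card \<sigma> = k}"

lemma pairs_subset_iff: "pairs \<sigma> \<subseteq> G \<longleftrightarrow> (\<forall>u\<in>\<sigma>. \<forall>v\<in>\<sigma>. u \<noteq> v \<longrightarrow> {u, v} \<in> G)"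
proof
  assume "pairs \<sigma> \<subseteq> G"
  then show "\<forall>u\<in>\<sigma>. \<forall>v\<in>\<sigma>. u \<noteq> v \<longrightarrow> {u, v} \<in> G"
    unfolding pairs_def by auto
next
  assume "\<forall>u\<in>\<sigma>. \<forall>v\<in>\<sigma>. u \<noteq> v \<longrightarrow> {u, v} \<in> G"
  then show "pairs \<sigma> \<subseteq> G"
    unfolding pairs_def by (auto simp: card_2_iff)
qed

lemma card_pairs: "finite \<sigma> \<Longrightarrow> card (pairs \<sigma>) = card \<sigma> choose 2"
  unfolding pairs_def by (rule n_subsets)

lemma card_pairs_Un:
  assumes "finite \<sigma>" "finite \<tau>" "card \<sigma> = m" "card \<tau> = m"
  shows "card (pairs \<sigma> \<union> pairs \<tau>) = 2 * (m choose 2) - (card (\<sigma> \<inter> \<tau>) choose 2)"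
proof -
  have fin: "finite (pairs A)" if "finite A" for A
    unfolding pairs_def by (rule finite_subset[of _ "Pow A"]) (use that in auto)
  have "pairs \<sigma> \<inter> pairs \<tau> = pairs (\<sigma> \<inter> \<tau>)"
    unfolding pairs_def by auto
  moreover have "card (pairs \<sigma>) + card (pairs \<tau>) = card (pairs \<sigma> \<union> pairs \<tau>) + card (pairs \<sigma> \<inter> pairs \<tau>)"
    by (rule card_Un_Int) (simp_all add: fin assms)
  ultimately show ?thesis
    using assms by (simp add: card_pairs)
qed

lemma finite_k_subsets: "finite (k_subsets n k)"
  unfolding k_subsets_def by (rule finite_subset[of _ "Pow {0..<n}"]) auto

lemma card_k_subsets: "card (k_subsets n k) = n choose k"
  unfolding k_subsets_def using n_subsets[of "{0..<n}" k] by simp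

lemma k_subsets_finite: "\<sigma> \<in> k_subsets n k \<Longrightarrow> finite \<sigma>"
  unfolding k_subsets_def using finite_subset by blast

lemma card_k_subsets_supersets_le:
  assumes A: "A \<in> k_subsets n j" and "j \<le> m"
  shows "card {\<tau>\<in>k_subsets n m. A \<subseteq> \<tau>} \<le> (n - j) choose (m - j)"
proof -
  have finA: "finite A" using A by (rule k_subsets_finite)
  have "card {\<tau>\<in>k_subsets n m. A \<subseteq> \<tau>} \<le> card {B. B \<subseteq> {0..<n} - A \<and> card B = m - j}"
  proof (rule card_inj_on_le)
    show "inj_on (\<lambda>\<tau>. \<tau> - A) {\<tau>\<in>k_subsets n m. A \<subseteq> \<tau>}"
      by (rule inj_onI) (metis (no_types, lifting) Diff_partition mem_Collect_eq)
    show "(\<lambda>\<tau>. \<tau> - A) ` {\<tau>\<in>k_subsets n m. A \<subseteq> \<tau>} \<subseteq> {B. B \<subseteq> {0..<n} - A \<and> card B = m - j}"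
      using A finA by (auto simp: k_subsets_def card_Diff_subset)
    show "finite {B. B \<subseteq> {0..<n} - A \<and> card B = m - j}"
      by (rule finite_subset[of _ "Pow {0..<n}"]) auto
  qed
  also have "\<dots> = (n - j) choose (m - j)"
    using n_subsets[of "{0..<n} - A" "m - j"] A finA by (simp add: k_subsets_def card_Diff_subset)
  finally show ?thesis .
qed

lemma card_k_subsets_meeting_le:
  assumes \<sigma>: "\<sigma> \<in> k_subsets n m" and "j \<le> m"
  shows "card {\<tau>\<in>k_subsets n m. card (\<sigma> \<inter> \<tau>) = j} \<le> (m choose j) * ((n - j) choose (m - j))"
proof -
  let ?S = "k_subsets n m" and ?As = "{A. A \<subseteq> \<sigma> \<and> card A = j}"
  have fin\<sigma>: "finite \<sigma>" using \<sigma> by (rule k_subsets_finite)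
  have "{\<tau>\<in>?S. card (\<sigma> \<inter> \<tau>) = j} \<subseteq> (\<Union>A\<in>?As. {\<tau>\<in>?S. A \<subseteq> \<tau>})"
    by (auto intro: UN_I[of "\<sigma> \<inter> _"])
  then have "card {\<tau>\<in>?S. card (\<sigma> \<inter> \<tau>) = j} \<le> card (\<Union>A\<in>?As. {\<tau>\<in>?S. A \<subseteq> \<tau>})"
    by (rule card_mono[rotated]) (rule finite_subset[OF _ finite_k_subsets], blast)
  also have "\<dots> \<le> (\<Sum>A\<in>?As. card {\<tau>\<in>?S. A \<subseteq> \<tau>})"
    by (rule card_UN_le) (use fin\<sigma> in auto)
  also have "\<dots> \<le> (\<Sum>A\<in>?As. (n - j) choose (m - j))"
    by (intro sum_mono card_k_subsets_supersets_le \<open>j \<le> m\<close>) (use \<sigma> in \<open>auto simp: k_subsets_def\<close>)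
  also have "\<dots> = (m choose j) * ((n - j) choose (m - j))"
    using n_subsets[OF fin\<sigma>, of j] \<sigma> by (simp add: k_subsets_def)
  finally show ?thesis .
qed

lemma sum_comp_eq_sum_card_fibres:
  fixes f :: "'b \<Rightarrow> 'c::semiring_1"
  assumes "finite S" "finite T" "\<phi> ` S \<subseteq> T"
  shows "(\<Sum>x\<in>S. f (\<phi> x)) = (\<Sum>j\<in>T. of_nat (card {x\<in>S. \<phi> x = j}) * f j)"
proof -
  have "(\<Sum>x\<in>S. f (\<phi> x)) = (\<Sum>j\<in>T. \<Sum>x\<in>{x\<in>S. \<phi> x = j}. f (\<phi> x))"
    by (rule sum.group[symmetric]) (use assms in auto)
  also have "\<dots> = (\<Sum>j\<in>T. of_nat (card {x\<in>S. \<phi> x = j}) * f j)"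
    by (intro sum.cong refl) simp
  finally show ?thesis .
qed

lemma sum_k_subsets_by_meet_le:
  fixes g :: "nat \<Rightarrow> real"
  assumes \<sigma>: "\<sigma> \<in> k_subsets n m" and g: "\<And>j. 1 \<le> g j" "\<And>j. j < 2 \<Longrightarrow> g j = 1"
  shows "(\<Sum>\<tau>\<in>k_subsets n m. g (card (\<sigma> \<inter> \<tau>)))
    \<le> real (n choose m) + (\<Sum>j\<in>{2..m}. real ((m choose j) * ((n - j) choose (m - j))) * g j)"
proof -
  let ?S = "k_subsets n m"
  define c where "c j = card {\<tau>\<in>?S. card (\<sigma> \<inter> \<tau>) = j}" for j
  have "card (\<sigma> \<inter> \<tau>) \<le> m" for \<tau>
    using \<sigma> k_subsets_finite[OF \<sigma>] card_mono[of \<sigma> "\<sigma> \<inter> \<tau>"] by (auto simp: k_subsets_def)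
  then have fibres: "(\<Sum>\<tau>\<in>?S. f (card (\<sigma> \<inter> \<tau>))) = (\<Sum>j\<in>{0..m}. real (c j) * f j)"
    for f :: "nat \<Rightarrow> real"
    unfolding c_def by (intro sum_comp_eq_sum_card_fibres finite_k_subsets) auto
  have "(\<Sum>\<tau>\<in>?S. g (card (\<sigma> \<inter> \<tau>)))
      = (\<Sum>j\<in>{0..m}. real (c j)) + (\<Sum>j\<in>{0..m}. real (c j) * (g j - 1))"
    by (simp add: fibres sum.distrib[symmetric] algebra_simps)
  also have "(\<Sum>j\<in>{0..m}. real (c j)) = real (n choose m)"
    using fibres[of "\<lambda>_. 1"] by (simp add: card_k_subsets)
  also have "(\<Sum>j\<in>{0..m}. real (c j) * (g j - 1)) = (\<Sum>j\<in>{2..m}. real (c j) * (g j - 1))"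
    by (rule sum.mono_neutral_right) (auto simp: g(2))
  also have "\<dots> \<le> (\<Sum>j\<in>{2..m}. real ((m choose j) * ((n - j) choose (m - j))) * g j)"
  proof (rule sum_mono)
    fix j assume "j \<in> {2..m}"
    then have "real (c j) \<le> real ((m choose j) * ((n - j) choose (m - j)))"
      unfolding c_def of_nat_le_iff by (intro card_k_subsets_meeting_le \<sigma>) simp
    then show "real (c j) * (g j - 1) \<le> real ((m choose j) * ((n - j) choose (m - j))) * g j"
      using g(1)[of j] by (intro mult_mono) auto
  qed
  finally show ?thesis
    by simp
qed

lemma choose_ratio_le:
  assumes "2 \<le> j" "j \<le> m" "m \<le> n"
  shows "real ((m choose j) * ((n - j) choose (m - j))) / real (n choose m)
     \<le> real (m choose j) ^ 2 * real j ^ j / real n ^ j"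
proof -
  have "(n choose m) * (m choose j) = (n choose j) * ((n - j) choose (m - j))"
    using assms by (intro choose_mult) auto
  then have "real (m choose j) * real ((n - j) choose (m - j)) * real (n choose j)
      = real (m choose j) ^ 2 * real (n choose m)"
    by (simp add: power2_eq_square algebra_simps flip: of_nat_mult)
  moreover have pos: "0 < real (n choose m)" "0 < real (n choose j)"
    using assms by auto
  ultimately have "real ((m choose j) * ((n - j) choose (m - j))) / real (n choose m)
      = real (m choose j) ^ 2 / real (n choose j)"
    by (simp add: field_simps)
  also have "\<dots> \<le> real (m choose j) ^ 2 / ((real n / real j) ^ j)"
    using binomial_ge_n_over_k_pow_k[of j n] pos assms by (intro divide_left_mono) auto
  also have "\<dots> = real (m choose j) ^ 2 * real j ^ j / real n ^ j"
    by (simp add: power_divide)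
  finally show ?thesis .
qed

section \<open>Cliques in the random graph\<close>

lemma set_pmf_random_graph: "set_pmf (random_graph L p) \<subseteq> Pow (edges L)"
  unfolding random_graph_def by auto

lemma prob_random_graph_superset:
  assumes fin: "finite (edges L)" and T: "T \<subseteq> edges L" and p: "0 \<le> p" "p \<le> 1"
  shows "measure_pmf.prob (random_graph L p) {G. T \<subseteq> G} = p ^ card T"
proof -
  define B where "B x = (if x \<in> T then {True} else UNIV)" for x
  have preimage: "(\<lambda>f. {e\<in>edges L. f e}) -` {G. T \<subseteq> G} = Pi (edges L) B"
    using T unfolding B_def Pi_def by auto
  have "measure_pmf.prob (random_graph L p) {G. T \<subseteq> G}
      = measure_pmf.prob (Pi_pmf (edges L) False (\<lambda>_. bernoulli_pmf p)) (Pi (edges L) B)"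
    unfolding random_graph_def measure_map_pmf preimage ..
  also have "\<dots> = (\<Prod>x\<in>edges L. measure_pmf.prob (bernoulli_pmf p) (B x))"
    using fin by (rule measure_Pi_pmf_Pi)
  also have "\<dots> = (\<Prod>x\<in>edges L. if x \<in> T then p else 1)"
    using p by (intro prod.cong refl) (auto simp: B_def measure_pmf_single)
  also have "\<dots> = p ^ card T"
    using fin T by (simp add: prod.If_cases Int_absorb1)
  finally show ?thesis .
qed

lemma pairs_subset_edges:
  assumes "simplicial_complex_on n L" and "\<sigma> \<in> L"
  shows "pairs \<sigma> \<subseteq> edges L"
proof
  fix e assume "e \<in> pairs \<sigma>"
  then have "e \<subseteq> \<sigma>" "card e = 2" "e \<noteq> {}"
    by (auto simp: pairs_def)
  then show "e \<in> edges L"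
    using assms unfolding simplicial_complex_on_def edges_def by blast
qed

lemma prob_random_graph_clique:
  assumes "finite (edges L)" and "pairs \<sigma> \<subseteq> edges L" and "finite \<sigma>" and "0 \<le> p" "p \<le> 1"
  shows "measure_pmf.prob (random_graph L p) {G. pairs \<sigma> \<subseteq> G} = p ^ (card \<sigma> choose 2)"
  using prob_random_graph_superset[OF assms(1,2,4,5)] card_pairs[OF assms(3)] by simp

lemma sum_pow_card_pairs_Un_le:
  fixes p :: real
  assumes \<sigma>: "\<sigma> \<in> k_subsets n m" and p: "0 < p" "p \<le> 1"
  shows "(\<Sum>\<tau>\<in>k_subsets n m. p ^ card (pairs \<sigma> \<union> pairs \<tau>))
    \<le> p ^ (2 * (m choose 2)) * (real (n choose m)
        + (\<Sum>j\<in>{2..m}. real ((m choose j) * ((n - j) choose (m - j))) / p ^ (j choose 2)))"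
proof -
  define g where "g j = 1 / p ^ (j choose 2)" for j
  have pow_card_eq: "p ^ card (pairs \<sigma> \<union> pairs \<tau>) = p ^ (2 * (m choose 2)) * g (card (\<sigma> \<inter> \<tau>))"
    if \<tau>: "\<tau> \<in> k_subsets n m" for \<tau>
  proof -
    have "card (\<sigma> \<inter> \<tau>) \<le> m"
      using \<sigma> k_subsets_finite[OF \<sigma>] card_mono[of \<sigma> "\<sigma> \<inter> \<tau>"] by (auto simp: k_subsets_def)
    then have "card (\<sigma> \<inter> \<tau>) choose 2 \<le> 2 * (m choose 2)"
      using binomial_right_mono[of "card (\<sigma> \<inter> \<tau>)" m 2] by linarith
    moreover have "card (pairs \<sigma> \<union> pairs \<tau>) = 2 * (m choose 2) - (card (\<sigma> \<inter> \<tau>) choose 2)"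
      using \<sigma> \<tau> by (intro card_pairs_Un k_subsets_finite) (auto simp: k_subsets_def)
    ultimately show ?thesis
      using p by (simp add: g_def power_diff)
  qed
  have "(\<Sum>\<tau>\<in>k_subsets n m. g (card (\<sigma> \<inter> \<tau>)))
      \<le> real (n choose m) + (\<Sum>j\<in>{2..m}. real ((m choose j) * ((n - j) choose (m - j))) * g j)"
    using p by (intro sum_k_subsets_by_meet_le \<sigma>) (auto simp: g_def power_le_one binomial_eq_0)
  then have "p ^ (2 * (m choose 2)) * (\<Sum>\<tau>\<in>k_subsets n m. g (card (\<sigma> \<inter> \<tau>)))
      \<le> p ^ (2 * (m choose 2)) * (real (n choose m)
        + (\<Sum>j\<in>{2..m}. real ((m choose j) * ((n - j) choose (m - j))) * g j))"
    using p by (intro mult_left_mono) auto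
  then show ?thesis
    by (simp add: pow_card_eq sum_distrib_left g_def)
qed

lemma prob_no_clique_le:
  fixes p :: real
  assumes p: "0 < p" "p \<le> 1" and m: "2 \<le> m" "m \<le> n" and fin: "finite (edges L)"
    and complete: "\<And>\<sigma>. \<sigma> \<in> k_subsets n m \<Longrightarrow> pairs \<sigma> \<subseteq> edges L"
  shows "measure_pmf.prob (random_graph L p) {G. \<forall>\<sigma>\<in>k_subsets n m. \<not> pairs \<sigma> \<subseteq> G}
    \<le> (\<Sum>j\<in>{2..m}. real (m choose j) ^ 2 * real j ^ j / (real n ^ j * p ^ (j choose 2)))"
proof -
  let ?S = "k_subsets n m" and ?P = "measure_pmf.prob (random_graph L p)"
  define k where "k = m choose 2"
  define N where "N = real (n choose m)"
  define R where "R = (\<Sum>j\<in>{2..m}. real ((m choose j) * ((n - j) choose (m - j))) / p ^ (j choose 2))"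
  have N: "N > 0"
    unfolding N_def using m by simp
  have single: "?P {G. pairs \<sigma> \<subseteq> G} = p ^ k" if "\<sigma> \<in> ?S" for \<sigma>
    using prob_random_graph_clique[OF fin complete[OF that] k_subsets_finite[OF that]] p that
    by (simp add: k_def k_subsets_def)
  have both: "?P ({G. pairs \<sigma> \<subseteq> G} \<inter> {G. pairs \<tau> \<subseteq> G}) = p ^ card (pairs \<sigma> \<union> pairs \<tau>)"
    if "\<sigma> \<in> ?S" "\<tau> \<in> ?S" for \<sigma> \<tau>
  proof -
    have "{G. pairs \<sigma> \<subseteq> G} \<inter> {G. pairs \<tau> \<subseteq> G} = {G. pairs \<sigma> \<union> pairs \<tau> \<subseteq> G}"
      by blast
    moreover have "pairs \<sigma> \<union> pairs \<tau> \<subseteq> edges L"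
      using complete that by blast
    ultimately show ?thesis
      using prob_random_graph_superset[OF fin _ less_imp_le[OF p(1)] p(2)] by presburger
  qed
  have mean: "(\<Sum>\<sigma>\<in>?S. ?P {G. pairs \<sigma> \<subseteq> G}) = N * p ^ k"
    by (simp add: single N_def card_k_subsets)
  have "?P {G. \<forall>\<sigma>\<in>?S. G \<notin> {G. pairs \<sigma> \<subseteq> G}}
      \<le> ((\<Sum>\<sigma>\<in>?S. \<Sum>\<tau>\<in>?S. ?P ({G. pairs \<sigma> \<subseteq> G} \<inter> {G. pairs \<tau> \<subseteq> G})) - (N * p ^ k)\<^sup>2) / (N * p ^ k)\<^sup>2"
    using prob_none_le_second_moment[of "random_graph L p" ?S "\<lambda>\<sigma>. {G. pairs \<sigma> \<subseteq> G}"]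
      finite_subset[OF set_pmf_random_graph] fin N p
    by (simp add: finite_k_subsets mean)
  also have "\<dots> \<le> (N * (p ^ (2 * k) * (N + R)) - (N * p ^ k)\<^sup>2) / (N * p ^ k)\<^sup>2"
  proof -
    have "(\<Sum>\<sigma>\<in>?S. \<Sum>\<tau>\<in>?S. ?P ({G. pairs \<sigma> \<subseteq> G} \<inter> {G. pairs \<tau> \<subseteq> G}))
        \<le> (\<Sum>\<sigma>\<in>?S. p ^ (2 * k) * (N + R))"
      using sum_pow_card_pairs_Un_le p by (intro sum_mono) (simp add: both k_def N_def R_def)
    then show ?thesis
      by (intro divide_right_mono) (simp_all add: N_def card_k_subsets mult.assoc)
  qed
  also have "\<dots> = R / N"
  proof -
    have "(N * p ^ k)\<^sup>2 = N * (p ^ (2 * k) * N)"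
      by (simp add: power_mult_distrib power_mult power2_eq_square)
    then show ?thesis
      using N p by (simp add: distrib_left divide_simps)
  qed
  also have "\<dots> = (\<Sum>j\<in>{2..m}. real ((m choose j) * ((n - j) choose (m - j))) / N / p ^ (j choose 2))"
    unfolding R_def sum_divide_distrib by (simp add: divide_divide_eq_left mult.commute)
  also have "\<dots> \<le> (\<Sum>j\<in>{2..m}. real (m choose j) ^ 2 * real j ^ j / real n ^ j / p ^ (j choose 2))"
    unfolding N_def using choose_ratio_le m p by (intro sum_mono divide_right_mono) auto
  finally show ?thesis
    by (simp add: divide_divide_eq_left)
qed

section \<open>Dimension of the clique complex\<close>

lemma finite_X_GL: "finite (X_GL n G L)"
  by (rule finite_subset[OF _ finite_Delta[of n]]) (auto simp: X_GL_def clique_complex_def)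

lemma k_subsets_subset_if_Sk_eq:
  assumes "Sk r L = Sk r (Delta n)"
  shows "k_subsets n (r + 1) \<subseteq> L"
proof
  fix \<sigma> assume "\<sigma> \<in> k_subsets n (r + 1)"
  then have "\<sigma> \<in> Sk r (Delta n)"
    by (auto simp: Sk_def Delta_def k_subsets_def)
  then have "\<sigma> \<in> Sk r L"
    using assms by simp
  then show "\<sigma> \<in> L"
    by (simp add: Sk_def)
qed

lemma cdim_gt_imp_clique_simplex:
  assumes L: "simplicial_complex_on n L" and gt: "\<not> cdim (X_GL n G L) \<le> int r"
  shows "\<exists>\<sigma>\<in>L. card \<sigma> = r + 2 \<and> pairs \<sigma> \<subseteq> G"
proof -
  let ?X = "X_GL n G L"
  have ne: "?X \<noteq> {}"
    using gt by (auto simp: cdim_def)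
  then have "r + 2 \<le> Max (card ` ?X)"
    using gt by (simp add: cdim_def)
  then obtain \<tau> where \<tau>: "\<tau> \<in> ?X" "r + 2 \<le> card \<tau>"
    using Max_in[of "card ` ?X"] finite_X_GL ne by fastforce
  then obtain \<sigma> where \<sigma>: "\<sigma> \<subseteq> \<tau>" "card \<sigma> = r + 2"
    by (meson obtain_subset_with_card_n)
  have "\<tau> \<in> L" "pairs \<tau> \<subseteq> G"
    using \<tau> by (auto simp: X_GL_def clique_complex_def pairs_subset_iff)
  moreover have "\<sigma> \<noteq> {}"
    using \<sigma> by auto
  ultimately have "\<sigma> \<in> L"
    using L \<sigma>(1) unfolding simplicial_complex_on_def by blast
  moreover have "pairs \<sigma> \<subseteq> G"
    using \<open>pairs \<tau> \<subseteq> G\<close> \<sigma>(1) unfolding pairs_def by blast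
  ultimately show ?thesis
    using \<sigma>(2) by blast
qed

lemma clique_imp_cdim_ge:
  assumes Sk: "Sk r L = Sk r (Delta n)" and \<sigma>: "\<sigma> \<in> k_subsets n (r + 1)" "pairs \<sigma> \<subseteq> G"
  shows "int r \<le> cdim (X_GL n G L)"
proof -
  have "\<sigma> \<in> L" "\<sigma> \<in> Delta n"
    using k_subsets_subset_if_Sk_eq[OF Sk] \<sigma>(1) by (auto simp: Delta_def k_subsets_def)
  then have "\<sigma> \<in> X_GL n G L"
    using \<sigma>(2) by (simp add: X_GL_def clique_complex_def pairs_subset_iff)
  moreover have "card \<sigma> = r + 1"
    using \<sigma> by (simp add: k_subsets_def)
  ultimately have "r + 1 \<le> Max (card ` X_GL n G L)"
    using finite_X_GL by (metis Max_ge finite_imageI image_eqI)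
  then show ?thesis
    using \<open>\<sigma> \<in> X_GL n G L\<close> by (auto simp: cdim_def)
qed

lemma prob_cdim_gt_le:
  fixes p :: real
  assumes L: "simplicial_complex_on n L" and p: "0 \<le> p" "p \<le> 1"
  shows "measure_pmf.prob (random_graph L p) {G. \<not> cdim (X_GL n G L) \<le> int r}
    \<le> real n ^ (r + 2) * p ^ ((r + 2) choose 2)"
proof -
  let ?P = "measure_pmf.prob (random_graph L p)"
  define T where "T = {\<sigma>\<in>L. card \<sigma> = r + 2}"
  have LD: "L \<subseteq> Delta n"
    using L by (simp add: simplicial_complex_on_def)
  have T: "T \<subseteq> k_subsets n (r + 2)"
    using LD by (auto simp: T_def Delta_def k_subsets_def)
  have single: "?P {G. pairs \<sigma> \<subseteq> G} = p ^ ((r + 2) choose 2)" if "\<sigma> \<in> T" for \<sigma>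
  proof -
    have "\<sigma> \<in> L" "finite \<sigma>"
      using that T k_subsets_finite by (auto simp: T_def)
    then show ?thesis
      using prob_random_graph_clique[OF finite_edges[OF LD] pairs_subset_edges[OF L] _ p] that
      by (simp add: T_def)
  qed
  have "{G. \<not> cdim (X_GL n G L) \<le> int r} \<subseteq> (\<Union>\<sigma>\<in>T. {G. pairs \<sigma> \<subseteq> G})"
    using cdim_gt_imp_clique_simplex[OF L] unfolding T_def by blast
  then have "?P {G. \<not> cdim (X_GL n G L) \<le> int r} \<le> ?P (\<Union>\<sigma>\<in>T. {G. pairs \<sigma> \<subseteq> G})"
    by (rule measure_pmf.finite_measure_mono) simp
  also have "\<dots> \<le> (\<Sum>\<sigma>\<in>T. ?P {G. pairs \<sigma> \<subseteq> G})"
    by (rule measure_pmf.finite_measure_subadditive_finite)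
      (auto intro: finite_subset[OF T finite_k_subsets])
  also have "\<dots> = real (card T) * p ^ ((r + 2) choose 2)"
    by (simp add: single)
  also have "\<dots> \<le> real n ^ (r + 2) * p ^ ((r + 2) choose 2)"
  proof (rule mult_right_mono)
    have "card T \<le> n choose (r + 2)"
      using card_mono[OF finite_k_subsets T] by (simp add: card_k_subsets)
    also have "\<dots> \<le> n ^ (r + 2)"
      by (cases "r + 2 \<le> n") (simp_all only: binomial_le_pow binomial_eq_0 not_le zero_le)
    finally show "real (card T) \<le> real n ^ (r + 2)"
      by (metis of_nat_le_iff of_nat_power)
  qed (use p in simp)
  finally show ?thesis .
qed

section \<open>Asymptotics\<close>

lemma real_choose_two: "real (k choose 2) = real k * (real k - 1) / 2"
proof -
  have "2 * (k choose 2) = k * (k - 1)"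
    by (induction k) (auto simp: numeral_2_eq_2 algebra_simps)
  then have "real (2 * (k choose 2)) = real (k * (k - 1))"
    by (rule arg_cong)
  then show ?thesis
    by (cases "k = 0") (simp_all add: of_nat_diff)
qed

lemma expected_cliques_at_scale:
  fixes s :: real
  assumes n: "1 \<le> n" and s: "0 \<le> s"
  shows "real n ^ (r + 2) * (s * real n powr (-2 / (real r + 1))) ^ ((r + 2) choose 2)
    = s ^ ((r + 2) choose 2)"
proof -
  define c where "c = (r + 2) choose 2"
  have pos: "real n > 0"
    using n by simp
  have exponent: "real (r + 2) + real c * (-2 / (real r + 1)) = 0"
    unfolding c_def real_choose_two by (simp add: field_simps)
  have "real n ^ (r + 2) = real n powr real (r + 2)"
    by (rule powr_realpow[symmetric]) (use pos in simp)
  moreover have "(real n powr (-2 / (real r + 1))) ^ c = real n powr (real c * (-2 / (real r + 1)))"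
    by (rule powr_power) (use pos in simp)
  ultimately have "real n ^ (r + 2) * (s * real n powr (-2 / (real r + 1))) ^ c
      = s ^ c * real n powr (real (r + 2) + real c * (-2 / (real r + 1)))"
    by (simp only: power_mult_distrib powr_add mult_ac)
  also have "\<dots> = s ^ c"
    using pos by (simp only: exponent powr_zero_eq_one) simp
  finally show ?thesis
    unfolding c_def .
qed

lemma le_expected_subcliques_at_scale:
  fixes t :: real
  assumes n: "1 \<le> n" and t: "1 \<le> t" and j: "2 \<le> j" "j \<le> r + 1"
  shows "t \<le> real n ^ j * (t * real n powr (-2 / real r)) ^ (j choose 2)"
proof -
  define c where "c = j choose 2"
  have n': "real n \<ge> 1"
    using n by simp
  have r: "real r \<ge> 1"
    using j by simp
  have c: "1 \<le> c"
    unfolding c_def using binomial_right_mono[OF j(1), of 2] by simp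
  have "real j * (real j - 1) \<le> real j * real r"
    using j by (intro mult_left_mono) auto
  then have exponent: "real j + real c * (-2 / real r) \<ge> 0"
    unfolding c_def real_choose_two using r by (simp add: field_simps)
  have "t \<le> t ^ c"
    using t c by (metis power_increasing power_one_right zero_le_one order_trans)
  also have "\<dots> \<le> t ^ c * real n powr (real j + real c * (-2 / real r))"
    using ge_one_powr_ge_zero[OF n' exponent] t by simp
  also have "\<dots> = real n ^ j * (t * real n powr (-2 / real r)) ^ c"
  proof -
    have "real n ^ j = real n powr real j"
      by (rule powr_realpow[symmetric]) (use n' in simp)
    moreover have "(real n powr (-2 / real r)) ^ c = real n powr (real c * (-2 / real r))"
      by (rule powr_power) (use n' in simp)
    ultimately show ?thesis
      by (simp only: power_mult_distrib powr_add mult_ac)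
  qed
  finally show ?thesis
    unfolding c_def .
qed

lemma aas_iff_prob_not:
  "aas M P \<longleftrightarrow> (\<lambda>n. measure_pmf.prob (M n) {x. \<not> P n x}) \<longlonglongrightarrow> 0"
proof -
  define q where "q n = measure_pmf.prob (M n) {x. \<not> P n x}" for n
  have "measure_pmf.prob (M n) {x. P n x} = 1 - q n" for n
    using measure_pmf.prob_compl[of "{x. \<not> P n x}" "M n"]
    by (simp add: q_def Compl_eq_Diff_UNIV[symmetric] Collect_neg_eq[symmetric])
  moreover have "(\<lambda>n. 1 - q n) \<longlonglongrightarrow> 1 \<longleftrightarrow> q \<longlonglongrightarrow> 0"
  proof
    assume "(\<lambda>n. 1 - q n) \<longlonglongrightarrow> 1"
    from tendsto_diff[OF tendsto_const[of 1] this] show "q \<longlonglongrightarrow> 0"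
      by simp
  next
    assume "q \<longlonglongrightarrow> 0"
    from tendsto_diff[OF tendsto_const this] show "(\<lambda>n. 1 - q n) \<longlonglongrightarrow> 1"
      by simp
  qed
  ultimately show ?thesis
    unfolding aas_def q_def by simp
qed

lemma aas_if_prob_not_le:
  assumes "eventually (\<lambda>n. measure_pmf.prob (M n) {x. \<not> P n x} \<le> b n) sequentially"
    and "b \<longlonglongrightarrow> 0"
  shows "aas M P"
  unfolding aas_iff_prob_not
  by (rule Lim_null_comparison[OF _ assms(2)]) (use assms(1) in simp)

lemma aas_mono:
  assumes "aas M P" and "\<And>n x. P n x \<Longrightarrow> Q n x"
  shows "aas M Q"
proof (rule aas_if_prob_not_le)
  show "eventually (\<lambda>n. measure_pmf.prob (M n) {x. \<not> Q n x} \<le> measure_pmf.prob (M n) {x. \<not> P n x})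
      sequentially"
    using assms(2) by (intro always_eventually allI measure_pmf.finite_measure_mono) auto
  show "(\<lambda>n. measure_pmf.prob (M n) {x. \<not> P n x}) \<longlonglongrightarrow> 0"
    using assms(1) by (simp add: aas_iff_prob_not)
qed

lemma aas_conj:
  assumes "aas M P" and "aas M Q"
  shows "aas M (\<lambda>n x. P n x \<and> Q n x)"
proof (rule aas_if_prob_not_le)
  have "measure_pmf.prob (M n) {x. \<not> (P n x \<and> Q n x)}
      \<le> measure_pmf.prob (M n) {x. \<not> P n x} + measure_pmf.prob (M n) {x. \<not> Q n x}" for n
  proof -
    have "{x. \<not> (P n x \<and> Q n x)} = {x. \<not> P n x} \<union> {x. \<not> Q n x}"
      by blast
    then show ?thesis
      using measure_Un_le[of "{x. \<not> P n x}" "M n" "{x. \<not> Q n x}"] by simp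
  qed
  then show "eventually (\<lambda>n. measure_pmf.prob (M n) {x. \<not> (P n x \<and> Q n x)}
      \<le> measure_pmf.prob (M n) {x. \<not> P n x} + measure_pmf.prob (M n) {x. \<not> Q n x}) sequentially"
    by simp
  show "(\<lambda>n. measure_pmf.prob (M n) {x. \<not> P n x} + measure_pmf.prob (M n) {x. \<not> Q n x}) \<longlonglongrightarrow> 0"
    using tendsto_add[OF assms[unfolded aas_iff_prob_not]] by simp
qed

lemma aas_cdim_le:
  assumes L: "\<And>n. simplicial_complex_on n (L n)" and p: "\<And>n. 0 \<le> p n \<and> p n \<le> 1"
    and sparse: "(\<lambda>n. p n / real n powr (-2 / (real r + 1))) \<longlonglongrightarrow> 0"
  shows "aas (\<lambda>n. random_graph (L n) (p n)) (\<lambda>n G. cdim (X_GL n G (L n)) \<le> int r)"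
proof -
  define s where "s n = p n / real n powr (-2 / (real r + 1))" for n
  define c where "c = (r + 2) choose 2"
  have "eventually (\<lambda>n. measure_pmf.prob (random_graph (L n) (p n))
      {G. \<not> cdim (X_GL n G (L n)) \<le> int r} \<le> s n ^ c) sequentially"
    using eventually_ge_at_top[of 1]
  proof eventually_elim
    case (elim n)
    have pos: "real n powr (-2 / (real r + 1)) > 0"
      using elim by simp
    then have "p n = s n * real n powr (-2 / (real r + 1))" "0 \<le> s n"
      using p[of n] by (simp_all add: s_def)
    then have "real n ^ (r + 2) * p n ^ c = s n ^ c"
      unfolding c_def using expected_cliques_at_scale elim by presburger
    then show ?case
      using prob_cdim_gt_le[OF L, of "p n" n r] p[of n] by (simp add: c_def)
  qed
  moreover have "(\<lambda>n. s n ^ c) \<longlonglongrightarrow> 0"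
  proof -
    have "s \<longlonglongrightarrow> 0"
      using sparse by (simp only: s_def[abs_def])
    moreover have "(0::real) ^ c = 0"
      by (simp add: c_def)
    ultimately show ?thesis
      using tendsto_power[of s 0 sequentially c] by (simp only:)
  qed
  ultimately show ?thesis
    by (rule aas_if_prob_not_le)
qed

lemma prob_no_clique_above_threshold_le:
  fixes t :: real
  assumes r: "1 \<le> r" and L: "simplicial_complex_on n L" and Sk: "Sk r L = Sk r (Delta n)"
    and n: "r + 1 \<le> n" and t: "1 \<le> t" and p: "t * real n powr (-2 / real r) \<le> 1"
  shows "measure_pmf.prob (random_graph L (t * real n powr (-2 / real r)))
      {G. \<forall>\<sigma>\<in>k_subsets n (r + 1). \<not> pairs \<sigma> \<subseteq> G}
    \<le> (\<Sum>j\<in>{2..r + 1}. real ((r + 1) choose j) ^ 2 * real j ^ j) / t"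
proof -
  let ?p = "t * real n powr (-2 / real r)"
  have LD: "L \<subseteq> Delta n"
    using L by (simp add: simplicial_complex_on_def)
  have "measure_pmf.prob (random_graph L ?p) {G. \<forall>\<sigma>\<in>k_subsets n (r + 1). \<not> pairs \<sigma> \<subseteq> G}
      \<le> (\<Sum>j\<in>{2..r + 1}. real ((r + 1) choose j) ^ 2 * real j ^ j / (real n ^ j * ?p ^ (j choose 2)))"
    using n t p r k_subsets_subset_if_Sk_eq[OF Sk]
    by (intro prob_no_clique_le finite_edges[OF LD] pairs_subset_edges[OF L]) auto
  also have "\<dots> \<le> (\<Sum>j\<in>{2..r + 1}. real ((r + 1) choose j) ^ 2 * real j ^ j / t)"
    using le_expected_subcliques_at_scale[of n t] n t
    by (intro sum_mono divide_left_mono) auto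
  also have "\<dots> = (\<Sum>j\<in>{2..r + 1}. real ((r + 1) choose j) ^ 2 * real j ^ j) / t"
    by (rule sum_divide_distrib[symmetric])
  finally show ?thesis .
qed

lemma aas_has_clique:
  assumes r: "1 \<le> r" and L: "\<And>n. simplicial_complex_on n (L n)"
    and p: "\<And>n. 0 \<le> p n \<and> p n \<le> 1" and Sk: "\<And>n. Sk r (L n) = Sk r (Delta n)"
    and dense: "filterlim (\<lambda>n. p n / real n powr (-2 / real r)) at_top sequentially"
  shows "aas (\<lambda>n. random_graph (L n) (p n)) (\<lambda>n G. \<exists>\<sigma>\<in>k_subsets n (r + 1). pairs \<sigma> \<subseteq> G)"
proof (rule aas_if_prob_not_le)
  define t where "t n = p n / real n powr (-2 / real r)" for n
  define K where "K = (\<Sum>j\<in>{2..r + 1}. real ((r + 1) choose j) ^ 2 * real j ^ j)"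
  show "eventually (\<lambda>n. measure_pmf.prob (random_graph (L n) (p n))
      {G. \<not> (\<exists>\<sigma>\<in>k_subsets n (r + 1). pairs \<sigma> \<subseteq> G)} \<le> K / t n) sequentially"
    using eventually_ge_at_top[of "r + 1"] filterlim_at_top[THEN iffD1, OF dense, rule_format, of 1]
  proof eventually_elim
    case (elim n)
    have "real n powr (-2 / real r) > 0"
      using elim by simp
    then have "p n = t n * real n powr (-2 / real r)"
      by (simp add: t_def)
    then show ?case
      using prob_no_clique_above_threshold_le[OF r L Sk elim(1), of "t n"] p[of n] elim(2)
      by (simp add: t_def K_def)
  qed
  show "(\<lambda>n. K / t n) \<longlonglongrightarrow> 0"
    using dense by (intro tendsto_divide_0[OF tendsto_const]) (simp add: t_def filterlim_at_top_imp_at_infinity)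
qed

theorem lemma5p1:
  fixes r :: nat and L :: "nat \<Rightarrow> nat set set" and p1 :: "nat \<Rightarrow> real"
  assumes "r \<ge> 2"
    and "\<And>n. simplicial_complex_on n (L n)"
    and "\<And>n. 0 \<le> p1 n \<and> p1 n \<le> 1"
    and "(\<lambda>n. p1 n / real n powr (-2 / (real r + 1))) \<longlonglongrightarrow> 0"
  shows "aas (\<lambda>n. random_graph (L n) (p1 n)) (\<lambda>n G. cdim (X_GL n G (L n)) \<le> int r)
    \<and> ((filterlim (\<lambda>n. p1 n / real n powr (-2 / real r)) at_top sequentially
         \<and> (\<forall>n. Sk r (L n) = Sk r (Delta n)))
        \<longrightarrow> aas (\<lambda>n. random_graph (L n) (p1 n)) (\<lambda>n G. cdim (X_GL n G (L n)) = int r))"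
proof (intro conjI impI)
  show upper: "aas (\<lambda>n. random_graph (L n) (p1 n)) (\<lambda>n G. cdim (X_GL n G (L n)) \<le> int r)"
    using assms(2-4) by (rule aas_cdim_le)
  assume dense_complete: "filterlim (\<lambda>n. p1 n / real n powr (-2 / real r)) at_top sequentially
    \<and> (\<forall>n. Sk r (L n) = Sk r (Delta n))"
  have "aas (\<lambda>n. random_graph (L n) (p1 n)) (\<lambda>n G. \<exists>\<sigma>\<in>k_subsets n (r + 1). pairs \<sigma> \<subseteq> G)"
    using assms(1-3) dense_complete by (intro aas_has_clique) auto
  then have "aas (\<lambda>n. random_graph (L n) (p1 n)) (\<lambda>n G. int r \<le> cdim (X_GL n G (L n)))"
    by (rule aas_mono) (use dense_complete clique_imp_cdim_ge in blast)
  with upper show "aas (\<lambda>n. random_graph (L n) (p1 n)) (\<lambda>n G. cdim (X_GL n G (L n)) = int r)"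
    by (rule aas_mono[OF aas_conj]) simp
qed

end
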